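(* Let $G$ be an $n\times n$ bimatrix game with payoffs in $[0,1]$ that satisfies the $(\epsilon,\Delta)$-approximation stability condition, and suppose that the union of the closed $\Delta$-balls (in the distance $d$) around all Nash equilibria of $G$ does not cover the whole space of mixed strategy pairs. Then $3\Delta\ge\epsilon$.
   Context: Mixed strategies are probability vectors; payoffs $p^TRq$, $p^TCq$; $e_i$ the $i$-th unit vector. Nash equilibrium: $e_i^TRq\le p^TRq$ and $p^TCe_j\le p^TCq$ for all $i,j$. $\epsilon$-equilibrium: $e_i^TRq\le p^TRq+\epsilon$ and $p^TCe_j\le p^TCq+\epsilon$ for all $i,j$. Distance $d(p,p')=\frac12\sum_i|p_i-p'_i|$, $d((p,q),(p',q'))=\max(d(p,p'),d(q,q'))$. $(\epsilon,\Delta)$-approximation stability: every $\epsilon$-equilibrium is within distance $\Delta$ of some Nash equilibrium. *)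

theory Defs
  imports "HOL-Analysis.Analysis"
begin

definition mixed :: "nat \<Rightarrow> (nat \<Rightarrow> real) set" where
  "mixed n = {p. (\<forall>i<n. 0 \<le> p i) \<and> (\<forall>i\<ge>n. p i = 0) \<and> (\<Sum>i<n. p i) = 1}"

definition unitv :: "nat \<Rightarrow> nat \<Rightarrow> real" where
  "unitv i = (\<lambda>j. if j = i then 1 else 0)"

definition payoff :: "nat \<Rightarrow> (nat \<Rightarrow> nat \<Rightarrow> real) \<Rightarrow> (nat \<Rightarrow> real) \<Rightarrow> (nat \<Rightarrow> real) \<Rightarrow> real" where
  "payoff n A p q = (\<Sum>i<n. \<Sum>j<n. p i * A i j * q j)"

definition eps_equilibrium :: "nat \<Rightarrow> (nat \<Rightarrow> nat \<Rightarrow> real) \<Rightarrow> (nat \<Rightarrow> nat \<Rightarrow> real) \<Rightarrow> real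
    \<Rightarrow> (nat \<Rightarrow> real) \<Rightarrow> (nat \<Rightarrow> real) \<Rightarrow> bool" where
  "eps_equilibrium n R C \<epsilon> p q \<longleftrightarrow> p \<in> mixed n \<and> q \<in> mixed n \<and>
     (\<forall>i<n. payoff n R (unitv i) q \<le> payoff n R p q + \<epsilon>) \<and>
     (\<forall>j<n. payoff n C p (unitv j) \<le> payoff n C p q + \<epsilon>)"

definition nash_equilibrium :: "nat \<Rightarrow> (nat \<Rightarrow> nat \<Rightarrow> real) \<Rightarrow> (nat \<Rightarrow> nat \<Rightarrow> real)
    \<Rightarrow> (nat \<Rightarrow> real) \<Rightarrow> (nat \<Rightarrow> real) \<Rightarrow> bool" where
  "nash_equilibrium n R C p q \<longleftrightarrow> p \<in> mixed n \<and> q \<in> mixed n \<and>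
     (\<forall>i<n. payoff n R (unitv i) q \<le> payoff n R p q) \<and>
     (\<forall>j<n. payoff n C p (unitv j) \<le> payoff n C p q)"

definition sdist :: "nat \<Rightarrow> (nat \<Rightarrow> real) \<Rightarrow> (nat \<Rightarrow> real) \<Rightarrow> real" where
  "sdist n p p' = (1/2) * (\<Sum>i<n. \<bar>p i - p' i\<bar>)"

definition pdist :: "nat \<Rightarrow> (nat \<Rightarrow> real) \<times> (nat \<Rightarrow> real) \<Rightarrow> (nat \<Rightarrow> real) \<times> (nat \<Rightarrow> real) \<Rightarrow> real" where
  "pdist n x y = max (sdist n (fst x) (fst y)) (sdist n (snd x) (snd y))"

definition approx_stable :: "nat \<Rightarrow> (nat \<Rightarrow> nat \<Rightarrow> real) \<Rightarrow> (nat \<Rightarrow> nat \<Rightarrow> real) \<Rightarrow> real \<Rightarrow> real \<Rightarrow> bool" where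
  "approx_stable n R C \<epsilon> \<Delta> \<longleftrightarrow>
     (\<forall>p q. eps_equilibrium n R C \<epsilon> p q \<longrightarrow>
        (\<exists>p' q'. nash_equilibrium n R C p' q' \<and> pdist n (p, q) (p', q') \<le> \<Delta>))"

end

theory Submission
  imports Defs "HOL-Homology.Brouwer_Degree"
begin

text \<open>Suppose \<open>3\<Delta> < \<epsilon>\<close>. A strategy pair within \<open>\<Delta>\<close> of a Nash equilibrium is a \<open>3\<Delta>\<close>-equilibrium,
  so every pair within \<open>\<epsilon>/3 - \<Delta>\<close> of it is an \<open>\<epsilon>\<close>-equilibrium and hence, by approximation
  stability, again within \<open>\<Delta>\<close> of some equilibrium. Walking from an equilibrium to an arbitrary
  pair along a segment in steps of that size therefore shows that every pair lies within \<open>\<Delta>\<close>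
  of an equilibrium, contradicting the hypothesis. The walk needs one equilibrium to start from:
  Nash's theorem, obtained from Brouwer's fixed point theorem, which in turn follows from the
  non-contractibility of spheres. Since the dimension \<open>2n\<close> is a term, not a type, the ball and
  the sphere live in \<open>nat \<Rightarrow> real\<close> with the product topology.\<close>

section \<open>Brouwer's fixed point theorem for the unit ball\<close>

definition nball :: "nat \<Rightarrow> (nat \<Rightarrow> real) set" where
  "nball m = {x. (\<forall>i>m. x i = 0) \<and> (\<Sum>i\<le>m. (x i)\<^sup>2) \<le> 1}"

definition nsphere_proj :: "nat \<Rightarrow> (nat \<Rightarrow> real) \<Rightarrow> nat \<Rightarrow> real" where
  "nsphere_proj m v = (\<lambda>i. v i / sqrt (\<Sum>j\<le>m. (v j)\<^sup>2))"

lemma topspace_nsphere_iff: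
  "x \<in> topspace (nsphere m) \<longleftrightarrow> (\<Sum>i\<le>m. (x i)\<^sup>2) = 1 \<and> (\<forall>i>m. x i = 0)"
  by (simp add: nsphere)

lemma nsphere_subset_nball: "topspace (nsphere m) \<subseteq> nball m"
  by (auto simp: topspace_nsphere_iff nball_def)

lemma scaled_in_nball:
  assumes "x \<in> nball m" and "\<bar>s\<bar> \<le> 1"
  shows "(\<lambda>i. s * x i) \<in> nball m"
proof -
  have "(\<Sum>i\<le>m. (s * x i)\<^sup>2) = s\<^sup>2 * (\<Sum>i\<le>m. (x i)\<^sup>2)"
    by (simp add: power_mult_distrib sum_distrib_left)
  also have "\<dots> \<le> 1 * 1"
    using assms by (intro mult_mono) (auto simp: nball_def abs_square_le_1 intro: sum_nonneg)
  finally show ?thesis using assms by (simp add: nball_def)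
qed

lemma sum_squares_pos:
  fixes v :: "nat \<Rightarrow> real"
  assumes "\<forall>i>m. v i = 0" and "v \<noteq> (\<lambda>_. 0)"
  shows "(\<Sum>i\<le>m. (v i)\<^sup>2) > 0"
proof -
  obtain k where k: "v k \<noteq> 0" using assms(2) by auto
  with assms(1) have "k \<le> m" by (cases "k \<le> m") (auto simp: not_le)
  with k show ?thesis by (intro sum_pos2[of _ k]) auto
qed

lemma continuous_map_nsphere_proj:
  assumes cont: "continuous_map X (powertop_real UNIV) v"
    and nz: "\<And>z. z \<in> topspace X \<Longrightarrow> (\<forall>i>m. v z i = 0) \<and> v z \<noteq> (\<lambda>_. 0)"
  shows "continuous_map X (nsphere m) (\<lambda>z. nsphere_proj m (v z))"
  unfolding nsphere
proof (rule continuous_map_into_subtopology)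
  have pos: "(\<Sum>j\<le>m. (v z j)\<^sup>2) > 0" if "z \<in> topspace X" for z
    using nz[OF that] by (intro sum_squares_pos) auto
  show "continuous_map X (powertop_real UNIV) (\<lambda>z. nsphere_proj m (v z))"
    using cont unfolding continuous_map_componentwise_UNIV nsphere_proj_def
    by (intro allI continuous_intros) (auto dest!: pos)
  show "(\<lambda>z. nsphere_proj m (v z)) \<in> topspace X \<rightarrow> {x. (\<Sum>i\<le>m. x i ^ 2) = 1 \<and> (\<forall>i>m. x i = 0)}"
  proof
    fix z assume z: "z \<in> topspace X"
    have "(\<Sum>i\<le>m. nsphere_proj m (v z) i ^ 2) = (\<Sum>i\<le>m. (v z i)\<^sup>2) / (\<Sum>j\<le>m. (v z j)\<^sup>2)"
      using pos[OF z] by (simp add: nsphere_proj_def power_divide flip: sum_divide_distrib)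
    with pos[OF z] nz[OF z] show "nsphere_proj m (v z) \<in> {x. (\<Sum>i\<le>m. x i ^ 2) = 1 \<and> (\<forall>i>m. x i = 0)}"
      by (simp add: nsphere_proj_def)
  qed
qed

lemma homotopic_nsphere_proj:
  fixes H :: "real \<times> (nat \<Rightarrow> real) \<Rightarrow> nat \<Rightarrow> real"
  assumes "continuous_map (prod_topology (top_of_set {0..1}) (nsphere m)) (powertop_real UNIV) H"
    and "\<And>t x. t \<in> {0..1} \<Longrightarrow> x \<in> topspace (nsphere m) \<Longrightarrow> (\<forall>i>m. H (t, x) i = 0) \<and> H (t, x) \<noteq> (\<lambda>_. 0)"
  shows "homotopic_with (\<lambda>_. True) (nsphere m) (nsphere m)
           (\<lambda>x. nsphere_proj m (H (0, x))) (\<lambda>x. nsphere_proj m (H (1, x)))"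
proof -
  have cont: "continuous_map (prod_topology (top_of_set {0..1}) (nsphere m)) (nsphere m) (\<lambda>z. nsphere_proj m (H z))"
    by (rule continuous_map_nsphere_proj[OF assms(1)]) (use assms(2) in auto)
  show ?thesis
    unfolding homotopic_with_def by (rule exI[of _ "\<lambda>z. nsphere_proj m (H z)"]) (simp add: cont)
qed

lemma nsphere_eq_scaled_nball:
  assumes x: "x \<in> topspace (nsphere m)" and y: "y \<in> nball m" and t: "t \<in> {0..1}"
    and eq: "\<forall>i\<le>m. x i = t * y i"
  shows "x = y"
proof -
  have "1 = (\<Sum>i\<le>m. (x i)\<^sup>2)" using x by (simp add: topspace_nsphere_iff)
  also have "\<dots> = t\<^sup>2 * (\<Sum>i\<le>m. (y i)\<^sup>2)"
    using eq by (simp add: power_mult_distrib sum_distrib_left)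
  also have "\<dots> \<le> t\<^sup>2" using y t by (intro mult_left_le) (auto simp: nball_def)
  moreover have "t\<^sup>2 \<le> t" using t by (simp add: power2_eq_square mult_left_le)
  ultimately have "t = 1" using t by simp
  show "x = y"
  proof
    fix i show "x i = y i"
      using eq x y \<open>t = 1\<close> by (cases "i \<le> m") (auto simp: topspace_nsphere_iff nball_def not_le)
  qed
qed

lemma continuous_map_nsphere_homotopy_coords:
  "continuous_map (prod_topology (top_of_set {0..1}) (nsphere m)) euclideanreal fst"
  "continuous_map (prod_topology (top_of_set {0..1}) (nsphere m)) (powertop_real UNIV) snd"
proof -
  show "continuous_map (prod_topology (top_of_set {0..1}) (nsphere m)) euclideanreal fst"
    by (rule continuous_map_into_fulltopology[OF continuous_map_fst])
  show "continuous_map (prod_topology (top_of_set {0..1}) (nsphere m)) (powertop_real UNIV) snd"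
    using continuous_map_snd[of "top_of_set {0..1}" "nsphere m"] unfolding nsphere
    by (rule continuous_map_into_fulltopology)
qed

text \<open>A fixed-point-free self-map \<open>g\<close> of the ball would make the sphere contractible: the direction
  of \<open>x - g x\<close> is homotopic on the sphere to the identity, through the directions of \<open>x - t g x\<close>,
  and to a constant, through the directions of \<open>y - g y\<close> at \<open>y = (1 - t) x\<close>.\<close>

context
  fixes m :: nat and g :: "(nat \<Rightarrow> real) \<Rightarrow> nat \<Rightarrow> real"
  assumes cont: "continuous_map (subtopology (powertop_real UNIV) (nball m)) (powertop_real UNIV) g"
    and maps: "g \<in> nball m \<rightarrow> nball m"
    and no_fix: "\<And>x. x \<in> nball m \<Longrightarrow> g x \<noteq> x"
begin

lemma continuous_map_compose_nball_self_map:
  assumes "continuous_map X (powertop_real UNIV) f" and "f \<in> topspace X \<rightarrow> nball m"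
  shows "continuous_map X (powertop_real UNIV) (\<lambda>z. g (f z))"
  using continuous_map_compose[OF continuous_map_into_subtopology[OF assms] cont] by (simp add: o_def)

lemma homotopic_id_displacement:
  "homotopic_with (\<lambda>_. True) (nsphere m) (nsphere m) id (\<lambda>x. nsphere_proj m (\<lambda>i. x i - g x i))"
proof -
  define push where "push z = (\<lambda>i. snd z i - fst z * g (snd z) i)" for z :: "real \<times> (nat \<Rightarrow> real)"
  note coords = continuous_map_nsphere_homotopy_coords[of m]
  have "homotopic_with (\<lambda>_. True) (nsphere m) (nsphere m)
          (\<lambda>x. nsphere_proj m (push (0, x))) (\<lambda>x. nsphere_proj m (push (1, x)))"
  proof (rule homotopic_nsphere_proj)
    show "continuous_map (prod_topology (top_of_set {0..1}) (nsphere m)) (powertop_real UNIV) push"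
      using coords continuous_map_compose_nball_self_map[OF coords(2)] nsphere_subset_nball
      unfolding push_def continuous_map_componentwise_UNIV
      by (intro allI continuous_intros) fastforce+
  next
    fix t :: real and x assume t: "t \<in> {0..1}" and x: "x \<in> topspace (nsphere m)"
    have gx: "g x \<in> nball m" using maps x nsphere_subset_nball by blast
    show "(\<forall>i>m. push (t, x) i = 0) \<and> push (t, x) \<noteq> (\<lambda>_. 0)"
    proof
      show "\<forall>i>m. push (t, x) i = 0" using gx x by (simp add: push_def nball_def topspace_nsphere_iff)
      show "push (t, x) \<noteq> (\<lambda>_. 0)"
      proof
        assume "push (t, x) = (\<lambda>_. 0)"
        then have "\<forall>i\<le>m. x i = t * g x i" by (simp add: push_def fun_eq_iff)
        then have "x = g x" by (rule nsphere_eq_scaled_nball[OF x gx t])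
        with no_fix gx show False by metis
      qed
    qed
  qed
  then show ?thesis
    by (rule homotopic_with_eq) (auto simp: push_def nsphere_proj_def topspace_nsphere_iff)
qed

lemma homotopic_displacement_const:
  "homotopic_with (\<lambda>_. True) (nsphere m) (nsphere m)
     (\<lambda>x. nsphere_proj m (\<lambda>i. x i - g x i)) (\<lambda>x. nsphere_proj m (\<lambda>i. - g (\<lambda>_. 0) i))"
proof -
  define shrink where "shrink z = (\<lambda>i. (1 - fst z) * snd z i)" for z :: "real \<times> (nat \<Rightarrow> real)"
  define pull where "pull z = (\<lambda>i. shrink z i - g (shrink z) i)" for z
  note coords = continuous_map_nsphere_homotopy_coords[of m]
  have shrink_nball: "shrink (t, x) \<in> nball m" if "t \<in> {0..1}" "x \<in> topspace (nsphere m)" for t x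
    unfolding shrink_def using that nsphere_subset_nball by (intro scaled_in_nball) auto
  have cont_shrink: "continuous_map (prod_topology (top_of_set {0..1}) (nsphere m)) (powertop_real UNIV) shrink"
    using coords unfolding shrink_def continuous_map_componentwise_UNIV
    by (intro allI continuous_intros) auto
  have "homotopic_with (\<lambda>_. True) (nsphere m) (nsphere m)
          (\<lambda>x. nsphere_proj m (pull (0, x))) (\<lambda>x. nsphere_proj m (pull (1, x)))"
  proof (rule homotopic_nsphere_proj)
    show "continuous_map (prod_topology (top_of_set {0..1}) (nsphere m)) (powertop_real UNIV) pull"
      using cont_shrink continuous_map_compose_nball_self_map[OF cont_shrink] shrink_nball
      unfolding pull_def continuous_map_componentwise_UNIV
      by (intro allI continuous_intros) fastforce+
  next
    fix t :: real and x assume t: "t \<in> {0..1}" and x: "x \<in> topspace (nsphere m)"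
    have sx: "shrink (t, x) \<in> nball m" by (rule shrink_nball[OF t x])
    have gsx: "g (shrink (t, x)) \<in> nball m" using maps sx by blast
    show "(\<forall>i>m. pull (t, x) i = 0) \<and> pull (t, x) \<noteq> (\<lambda>_. 0)"
    proof
      show "\<forall>i>m. pull (t, x) i = 0" using sx gsx by (simp add: pull_def nball_def)
      show "pull (t, x) \<noteq> (\<lambda>_. 0)"
      proof
        assume "pull (t, x) = (\<lambda>_. 0)"
        then have "g (shrink (t, x)) = shrink (t, x)" by (simp add: pull_def fun_eq_iff)
        with no_fix[OF sx] show False by simp
      qed
    qed
  qed
  then show ?thesis
    by (rule homotopic_with_eq) (auto simp: pull_def shrink_def)
qed

end

theorem nball_fixpoint:
  assumes "continuous_map (subtopology (powertop_real UNIV) (nball m)) (powertop_real UNIV) g"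
    and "g \<in> nball m \<rightarrow> nball m"
  shows "\<exists>x\<in>nball m. g x = x"
proof (rule ccontr)
  assume "\<not> ?thesis"
  then have "\<And>x. x \<in> nball m \<Longrightarrow> g x \<noteq> x" by blast
  with assms have "contractible_space (nsphere m)"
    unfolding contractible_space_def
    by (blast intro: homotopic_with_trans homotopic_id_displacement homotopic_displacement_const)
  with non_contractible_space_nsphere show False by blast
qed

section \<open>Payoffs and distances of mixed strategies\<close>

lemma mixed_le_1:
  assumes "p \<in> mixed n" and "i < n"
  shows "p i \<le> 1"
proof -
  have "p i \<le> (\<Sum>j<n. p j)"
    using assms by (intro member_le_sum) (auto simp: mixed_def)
  then show ?thesis using assms by (simp add: mixed_def)
qed

lemma unitv_mixed: "i < n \<Longrightarrow> unitv i \<in> mixed n"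
  by (auto simp: mixed_def unitv_def)

lemma mixed_imp_pos: "p \<in> mixed n \<Longrightarrow> n > 0"
  by (cases n) (auto simp: mixed_def)

definition row_payoffs :: "nat \<Rightarrow> (nat \<Rightarrow> nat \<Rightarrow> real) \<Rightarrow> (nat \<Rightarrow> real) \<Rightarrow> nat \<Rightarrow> real" where
  "row_payoffs n A q = (\<lambda>i. \<Sum>j<n. A i j * q j)"

definition col_payoffs :: "nat \<Rightarrow> (nat \<Rightarrow> nat \<Rightarrow> real) \<Rightarrow> (nat \<Rightarrow> real) \<Rightarrow> nat \<Rightarrow> real" where
  "col_payoffs n A p = (\<lambda>j. \<Sum>i<n. p i * A i j)"

lemma payoff_eq_row_payoffs: "payoff n A p q = (\<Sum>i<n. p i * row_payoffs n A q i)"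
  unfolding payoff_def row_payoffs_def by (simp add: sum_distrib_left mult.assoc)

lemma payoff_eq_col_payoffs: "payoff n A p q = (\<Sum>j<n. col_payoffs n A p j * q j)"
  unfolding payoff_def col_payoffs_def by (subst sum.swap) (simp add: sum_distrib_right)

lemma payoff_unitv_left: "i < n \<Longrightarrow> payoff n A (unitv i) q = row_payoffs n A q i"
  by (simp add: payoff_eq_row_payoffs unitv_def if_distrib [where f = "\<lambda>x. x * _"] cong: if_cong)

lemma payoff_unitv_right: "j < n \<Longrightarrow> payoff n A p (unitv j) = col_payoffs n A p j"
  by (simp add: payoff_eq_col_payoffs unitv_def if_distrib [where f = "\<lambda>x. _ * x"] cong: if_cong)

lemma row_payoffs_bounds:
  assumes A: "\<forall>i<n. \<forall>j<n. 0 \<le> A i j \<and> A i j \<le> 1" and q: "q \<in> mixed n" and i: "i < n"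
  shows "0 \<le> row_payoffs n A q i \<and> row_payoffs n A q i \<le> 1"
proof
  show "0 \<le> row_payoffs n A q i"
    using A q i by (auto simp: row_payoffs_def mixed_def intro: sum_nonneg)
  have "row_payoffs n A q i \<le> (\<Sum>j<n. 1 * q j)"
    using A q i unfolding row_payoffs_def by (intro sum_mono mult_right_mono) (auto simp: mixed_def)
  then show "row_payoffs n A q i \<le> 1" using q by (simp add: mixed_def)
qed

lemma col_payoffs_bounds:
  assumes A: "\<forall>i<n. \<forall>j<n. 0 \<le> A i j \<and> A i j \<le> 1" and p: "p \<in> mixed n" and j: "j < n"
  shows "0 \<le> col_payoffs n A p j \<and> col_payoffs n A p j \<le> 1"
proof
  show "0 \<le> col_payoffs n A p j"
    using A p j by (auto simp: col_payoffs_def mixed_def intro: sum_nonneg)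
  have "col_payoffs n A p j \<le> (\<Sum>i<n. p i * 1)"
    using A p j unfolding col_payoffs_def by (intro sum_mono mult_left_mono) (auto simp: mixed_def)
  then show "col_payoffs n A p j \<le> 1" using p by (simp add: mixed_def)
qed

lemma sdist_commute: "sdist n p q = sdist n q p"
  unfolding sdist_def by (simp add: abs_minus_commute)

lemma sdist_triangle: "sdist n p r \<le> sdist n p q + sdist n q r"
proof -
  have "(\<Sum>i<n. \<bar>p i - r i\<bar>) \<le> (\<Sum>i<n. \<bar>p i - q i\<bar> + \<bar>q i - r i\<bar>)"
    by (intro sum_mono) linarith
  then show ?thesis unfolding sdist_def by (simp add: sum.distrib)
qed

lemma pdist_triangle: "pdist n x z \<le> pdist n x y + pdist n y z"
  unfolding pdist_def
  using sdist_triangle[of n "fst x" "fst z" "fst y"] sdist_triangle[of n "snd x" "snd z" "snd y"]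
  by linarith

lemma sdist_le_1:
  assumes "p \<in> mixed n" and "q \<in> mixed n"
  shows "sdist n p q \<le> 1"
proof -
  have "(\<Sum>i<n. \<bar>p i - q i\<bar>) \<le> (\<Sum>i<n. p i + q i)"
    using assms by (intro sum_mono) (auto simp: mixed_def abs_le_iff)
  also have "\<dots> = 2" using assms by (simp add: sum.distrib mixed_def)
  finally show ?thesis by (simp add: sdist_def)
qed

lemma abs_weighted_diff_le_sdist:
  assumes r: "\<forall>j<n. 0 \<le> r j \<and> r j \<le> 1" and u: "u \<in> mixed n" and w: "w \<in> mixed n"
  shows "\<bar>\<Sum>j<n. r j * (u j - w j)\<bar> \<le> sdist n u w"
proof -
  \<comment> \<open>As \<open>u - w\<close> sums to zero, the weights may be shifted into \<open>[-1/2, 1/2]\<close>.\<close>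
  have "(\<Sum>j<n. r j * (u j - w j)) = (\<Sum>j<n. (r j - 1/2) * (u j - w j) + 1/2 * (u j - w j))"
    by (simp add: algebra_simps)
  also have "\<dots> = (\<Sum>j<n. (r j - 1/2) * (u j - w j)) + 1/2 * (\<Sum>j<n. u j - w j)"
    by (simp add: sum.distrib sum_distrib_left)
  also have "(\<Sum>j<n. u j - w j) = 0"
    using u w by (simp add: mixed_def sum_subtractf)
  finally have "(\<Sum>j<n. r j * (u j - w j)) = (\<Sum>j<n. (r j - 1/2) * (u j - w j))" by simp
  also have "\<bar>\<dots>\<bar> \<le> (\<Sum>j<n. \<bar>r j - 1/2\<bar> * \<bar>u j - w j\<bar>)"
    by (rule order_trans[OF sum_abs]) (simp add: abs_mult)
  also have "\<dots> \<le> (\<Sum>j<n. 1/2 * \<bar>u j - w j\<bar>)"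
  proof (intro sum_mono mult_right_mono)
    fix j assume "j \<in> {..<n}"
    with r have "0 \<le> r j \<and> r j \<le> 1" by simp
    then show "\<bar>r j - 1/2\<bar> \<le> 1/2" by (auto simp: abs_if)
  qed simp
  also have "\<dots> = sdist n u w" by (simp add: sdist_def sum_distrib_left)
  finally show ?thesis .
qed

lemma payoff_dist_left:
  assumes "\<forall>i<n. \<forall>j<n. 0 \<le> A i j \<and> A i j \<le> 1"
    and "q \<in> mixed n" and "p \<in> mixed n" and "p' \<in> mixed n"
  shows "\<bar>payoff n A p q - payoff n A p' q\<bar> \<le> sdist n p p'"
proof -
  have "payoff n A p q - payoff n A p' q = (\<Sum>i<n. row_payoffs n A q i * (p i - p' i))"
    by (simp add: payoff_eq_row_payoffs algebra_simps sum_subtractf)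
  then show ?thesis
    using abs_weighted_diff_le_sdist assms row_payoffs_bounds[OF assms(1,2)] by simp
qed

lemma payoff_dist_right:
  assumes "\<forall>i<n. \<forall>j<n. 0 \<le> A i j \<and> A i j \<le> 1"
    and "p \<in> mixed n" and "q \<in> mixed n" and "q' \<in> mixed n"
  shows "\<bar>payoff n A p q - payoff n A p q'\<bar> \<le> sdist n q q'"
proof -
  have "payoff n A p q - payoff n A p q' = (\<Sum>j<n. col_payoffs n A p j * (q j - q' j))"
    by (simp add: payoff_eq_col_payoffs algebra_simps sum_subtractf)
  then show ?thesis
    using abs_weighted_diff_le_sdist assms col_payoffs_bounds[OF assms(1,2)] by simp
qed

section \<open>Existence of Nash equilibria\<close>

text \<open>\<open>to_mixed\<close> is a continuous retraction onto \<open>mixed n\<close>: clip negative entries, then top up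
  uniformly or rescale. \<open>nash_map\<close> is Nash's improvement map, shifting weight towards the pure
  strategies that beat the current average payoff.\<close>

definition to_mixed :: "nat \<Rightarrow> (nat \<Rightarrow> real) \<Rightarrow> nat \<Rightarrow> real" where
  "to_mixed n v = (\<lambda>i. if i < n then (max (v i) 0 + max 0 (1 - (\<Sum>j<n. max (v j) 0)) / real n)
                     / max (\<Sum>j<n. max (v j) 0) 1 else 0)"

definition nash_map :: "nat \<Rightarrow> (nat \<Rightarrow> real) \<Rightarrow> (nat \<Rightarrow> real) \<Rightarrow> nat \<Rightarrow> real" where
  "nash_map n w u = (\<lambda>i. if i < n then (w i + max 0 (u i - (\<Sum>k<n. w k * u k)))
                     / (1 + (\<Sum>k<n. max 0 (u k - (\<Sum>l<n. w l * u l)))) else 0)"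

lemma to_mixed_mixed:
  assumes "n > 0"
  shows "to_mixed n v \<in> mixed n"
proof -
  define S where "S = (\<Sum>j<n. max (v j) 0)"
  define M where "M = max 0 (1 - S)"
  have "(\<Sum>i<n. max (v i) 0 + M / real n) = max S 1"
    using assms by (simp add: sum.distrib S_def M_def max_def)
  then have "(\<Sum>i<n. (max (v i) 0 + M / real n) / max S 1) = 1"
    by (simp flip: sum_divide_distrib)
  moreover have "0 \<le> (max (v i) 0 + M / real n) / max S 1" for i
    by (simp add: M_def)
  ultimately show ?thesis by (simp add: mixed_def to_mixed_def S_def M_def)
qed

lemma to_mixed_id:
  assumes "p \<in> mixed n"
  shows "to_mixed n p = p"
proof -
  have "(\<Sum>j<n. max (p j) 0) = 1"
    using assms by (simp add: mixed_def max_absorb1)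
  with assms show ?thesis by (auto simp: to_mixed_def mixed_def max_absorb1 fun_eq_iff)
qed

lemma nash_map_mixed:
  assumes w: "w \<in> mixed n"
  shows "nash_map n w u \<in> mixed n"
proof -
  define c where "c k = max 0 (u k - (\<Sum>l<n. w l * u l))" for k
  have c_nonneg: "(\<Sum>k<n. c k) \<ge> 0" unfolding c_def by (intro sum_nonneg) auto
  have "(\<Sum>i<n. w i + c i) = 1 + (\<Sum>k<n. c k)" using w by (simp add: sum.distrib mixed_def)
  then have "(\<Sum>i<n. (w i + c i) / (1 + (\<Sum>k<n. c k))) = 1"
    using c_nonneg by (simp flip: sum_divide_distrib)
  moreover have "0 \<le> (w i + c i) / (1 + (\<Sum>k<n. c k))" if "i < n" for i
    using c_nonneg w that by (intro divide_nonneg_pos add_nonneg_nonneg) (auto simp: mixed_def c_def)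
  ultimately show ?thesis by (simp add: mixed_def nash_map_def c_def)
qed

lemma mixed_support_below_average:
  assumes w: "w \<in> mixed n"
  shows "\<exists>k<n. w k > 0 \<and> u k \<le> (\<Sum>l<n. w l * u l)"
proof (rule ccontr)
  define v where "v = (\<Sum>l<n. w l * u l)"
  assume "\<not> ?thesis"
  then have above: "u k > v" if "k < n" "w k > 0" for k using that by (force simp: v_def)
  have w_nonneg: "w k \<ge> 0" if "k < n" for k using w that by (simp add: mixed_def)
  have "\<exists>k<n. w k > 0"
  proof (rule ccontr)
    assume "\<not> ?thesis"
    with w_nonneg have "\<forall>k<n. w k = 0" by (meson not_less order_antisym)
    with w show False by (simp add: mixed_def)
  qed
  then obtain k where k: "k < n" "w k > 0" by blast
  have "(\<Sum>l<n. w l * v) < (\<Sum>l<n. w l * u l)"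
  proof (rule sum_strict_mono_ex1)
    show "\<forall>l\<in>{..<n}. w l * v \<le> w l * u l"
      using above w_nonneg by (metis lessThan_iff less_eq_real_def mult_left_mono mult_zero_left)
    show "\<exists>l\<in>{..<n}. w l * v < w l * u l"
      using k above by (intro bexI[of _ k]) auto
  qed simp
  also have "(\<Sum>l<n. w l * v) = v" using w by (simp add: mixed_def v_def flip: sum_distrib_right)
  finally show False by (simp add: v_def)
qed

lemma nash_map_fixpoint_best_response:
  assumes w: "w \<in> mixed n" and fixed: "nash_map n w u = w" and i: "i < n"
  shows "u i \<le> (\<Sum>k<n. w k * u k)"
proof -
  define c where "c k = max 0 (u k - (\<Sum>l<n. w l * u l))" for k
  define T where "T = (\<Sum>k<n. c k)"
  have c_nonneg: "c k \<ge> 0" for k by (simp add: c_def)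
  then have "T \<ge> 0" unfolding T_def by (intro sum_nonneg)
  have gain: "c k = w k * T" if "k < n" for k
  proof -
    have "(w k + c k) / (1 + T) = w k"
      using fun_cong[OF fixed, of k] that by (simp add: nash_map_def c_def T_def)
    with \<open>T \<ge> 0\<close> show ?thesis by (simp add: field_simps)
  qed
  obtain k where "k < n" "w k > 0" "c k = 0"
    using mixed_support_below_average[OF w, of u] by (fastforce simp: c_def)
  with gain have "T = 0" by simp
  then have "c i = 0" using c_nonneg i by (simp add: T_def sum_nonneg_eq_0_iff)
  then show ?thesis by (simp add: c_def)
qed

lemma nash_equilibrium_if_nash_map_fixed:
  assumes a: "a \<in> mixed n" and b: "b \<in> mixed n"
    and fixed_a: "nash_map n a (row_payoffs n R b) = a"
    and fixed_b: "nash_map n b (col_payoffs n C a) = b"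
  shows "nash_equilibrium n R C a b"
  unfolding nash_equilibrium_def
proof (intro conjI allI impI a b)
  fix i assume i: "i < n"
  have "payoff n R (unitv i) b = row_payoffs n R b i" using i by (rule payoff_unitv_left)
  also have "\<dots> \<le> payoff n R a b"
    using nash_map_fixpoint_best_response[OF a fixed_a i] by (simp add: payoff_eq_row_payoffs)
  finally show "payoff n R (unitv i) b \<le> payoff n R a b" .
next
  fix j assume j: "j < n"
  have "payoff n C a (unitv j) = col_payoffs n C a j" using j by (rule payoff_unitv_right)
  also have "\<dots> \<le> payoff n C a b"
    using nash_map_fixpoint_best_response[OF b fixed_b j] by (simp add: payoff_eq_col_payoffs mult.commute)
  finally show "payoff n C a (unitv j) \<le> payoff n C a b" .
qed

text \<open>Halving makes a pair of mixed strategies a point of the unit ball of \<open>\<real>\<^bsup>2n\<^esup>\<close>.\<close>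

definition pair_embed :: "nat \<Rightarrow> (nat \<Rightarrow> real) \<Rightarrow> (nat \<Rightarrow> real) \<Rightarrow> nat \<Rightarrow> real" where
  "pair_embed n p q = (\<lambda>i. if i < n then p i / 2 else if i < 2 * n then q (i - n) / 2 else 0)"

definition unembed_fst :: "nat \<Rightarrow> (nat \<Rightarrow> real) \<Rightarrow> nat \<Rightarrow> real" where
  "unembed_fst n x = (\<lambda>i. if i < n then 2 * x i else 0)"

definition unembed_snd :: "nat \<Rightarrow> (nat \<Rightarrow> real) \<Rightarrow> nat \<Rightarrow> real" where
  "unembed_snd n x = (\<lambda>i. if i < n then 2 * x (n + i) else 0)"

lemma unembed_fst_pair_embed: "p \<in> mixed n \<Longrightarrow> unembed_fst n (pair_embed n p q) = p"
  by (auto simp: unembed_fst_def pair_embed_def mixed_def fun_eq_iff)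

lemma unembed_snd_pair_embed: "q \<in> mixed n \<Longrightarrow> unembed_snd n (pair_embed n p q) = q"
  by (auto simp: unembed_snd_def pair_embed_def mixed_def fun_eq_iff)

lemma pair_embed_nball:
  assumes n: "n > 0" and p: "p \<in> mixed n" and q: "q \<in> mixed n"
  shows "pair_embed n p q \<in> nball (2 * n - 1)"
proof -
  have half_sq: "(x / 2)\<^sup>2 \<le> x / 4" if "0 \<le> x" "x \<le> 1" for x :: real
    using that mult_left_le[of x x] by (simp add: power2_eq_square)
  let ?f = "\<lambda>i. (pair_embed n p q i)\<^sup>2"
  have "{..2 * n - 1} = {0..<n + n}" using n by auto
  then have "(\<Sum>i\<le>2 * n - 1. ?f i) = (\<Sum>i\<in>{0..<n}. ?f i) + (\<Sum>i\<in>{n..<n + n}. ?f i)"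
    by (simp add: sum.atLeastLessThan_concat)
  also have "\<dots> = (\<Sum>i<n. (p i / 2)\<^sup>2) + (\<Sum>i<n. (q i / 2)\<^sup>2)"
    by (simp add: sum.atLeastLessThan_shift_0 pair_embed_def atLeast0LessThan)
  also have "\<dots> \<le> (\<Sum>i<n. p i / 4) + (\<Sum>i<n. q i / 4)"
    using p q mixed_le_1[OF p] mixed_le_1[OF q]
    by (intro add_mono sum_mono half_sq) (auto simp: mixed_def)
  also have "\<dots> = 1 / 2" using p q by (simp add: mixed_def flip: sum_divide_distrib)
  finally show ?thesis using n by (auto simp: nball_def pair_embed_def)
qed

lemma continuous_map_to_mixed:
  assumes n: "n > 0" and v: "continuous_map X (powertop_real UNIV) v"
  shows "continuous_map X (powertop_real UNIV) (\<lambda>x. to_mixed n (v x))"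
  unfolding continuous_map_componentwise_UNIV
proof
  fix i
  have "continuous_map X euclideanreal (\<lambda>x. v x j)" for j
    using v by (simp add: continuous_map_componentwise_UNIV)
  moreover have "max a 1 \<noteq> (0::real)" for a by linarith
  ultimately show "continuous_map X euclideanreal (\<lambda>x. to_mixed n (v x) i)"
    using n by (cases "i < n") (auto simp: to_mixed_def intro!: continuous_intros)
qed

lemma continuous_map_nash_map:
  assumes w: "continuous_map X (powertop_real UNIV) w" and u: "continuous_map X (powertop_real UNIV) u"
  shows "continuous_map X (powertop_real UNIV) (\<lambda>x. nash_map n (w x) (u x))"
  unfolding continuous_map_componentwise_UNIV
proof
  fix i
  have "continuous_map X euclideanreal (\<lambda>x. w x j)" "continuous_map X euclideanreal (\<lambda>x. u x j)" for j
    using w u by (simp_all add: continuous_map_componentwise_UNIV)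
  moreover have "1 + (\<Sum>k<n. max 0 (f k)) \<noteq> (0::real)" for f
    using sum_nonneg[of "{..<n}" "\<lambda>k. max 0 (f k)"] by auto
  ultimately show "continuous_map X euclideanreal (\<lambda>x. nash_map n (w x) (u x) i)"
    by (cases "i < n") (auto simp: nash_map_def intro!: continuous_intros)
qed

lemma continuous_map_row_payoffs:
  assumes "continuous_map X (powertop_real UNIV) q"
  shows "continuous_map X (powertop_real UNIV) (\<lambda>x. row_payoffs n A (q x))"
  using assms unfolding continuous_map_componentwise_UNIV row_payoffs_def
  by (intro allI continuous_intros) auto

lemma continuous_map_col_payoffs:
  assumes "continuous_map X (powertop_real UNIV) p"
  shows "continuous_map X (powertop_real UNIV) (\<lambda>x. col_payoffs n A (p x))"
  using assms unfolding continuous_map_componentwise_UNIV col_payoffs_def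
  by (intro allI continuous_intros) auto

lemma continuous_map_pair_embed:
  assumes p: "continuous_map X (powertop_real UNIV) p" and q: "continuous_map X (powertop_real UNIV) q"
  shows "continuous_map X (powertop_real UNIV) (\<lambda>x. pair_embed n (p x) (q x))"
  unfolding continuous_map_componentwise_UNIV
proof
  fix i
  have "continuous_map X euclideanreal (\<lambda>x. p x j)" "continuous_map X euclideanreal (\<lambda>x. q x j)" for j
    using p q by (simp_all add: continuous_map_componentwise_UNIV)
  then show "continuous_map X euclideanreal (\<lambda>x. pair_embed n (p x) (q x) i)"
    by (auto simp: pair_embed_def intro!: continuous_intros)
qed

lemma continuous_map_unembed_fst:
  assumes "continuous_map X (powertop_real UNIV) x"
  shows "continuous_map X (powertop_real UNIV) (\<lambda>z. unembed_fst n (x z))"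
  using assms unfolding continuous_map_componentwise_UNIV unembed_fst_def
  by (auto intro!: continuous_intros)

lemma continuous_map_unembed_snd:
  assumes "continuous_map X (powertop_real UNIV) x"
  shows "continuous_map X (powertop_real UNIV) (\<lambda>z. unembed_snd n (x z))"
  using assms unfolding continuous_map_componentwise_UNIV unembed_snd_def
  by (auto intro!: continuous_intros)

theorem nash_equilibrium_exists:
  assumes n: "n > 0"
  shows "\<exists>a b. nash_equilibrium n R C a b"
proof -
  define row where "row x = to_mixed n (unembed_fst n x)" for x
  define col where "col x = to_mixed n (unembed_snd n x)" for x
  define G where "G x = pair_embed n (nash_map n (row x) (row_payoffs n R (col x)))
                                   (nash_map n (col x) (col_payoffs n C (row x)))" for x
  let ?B = "subtopology (powertop_real UNIV) (nball (2 * n - 1))"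
  have "continuous_map ?B (powertop_real UNIV) (\<lambda>x. x)"
    using continuous_map_from_subtopology[OF continuous_map_id] by (simp add: id_def)
  then have "continuous_map ?B (powertop_real UNIV) G"
    unfolding G_def row_def col_def
    by (intro continuous_map_pair_embed continuous_map_nash_map continuous_map_row_payoffs
        continuous_map_col_payoffs continuous_map_to_mixed continuous_map_unembed_fst
        continuous_map_unembed_snd n)
  moreover have "G \<in> nball (2 * n - 1) \<rightarrow> nball (2 * n - 1)"
    unfolding G_def row_def col_def by (intro funcsetI pair_embed_nball nash_map_mixed to_mixed_mixed n)
  ultimately obtain x where "G x = x" using nball_fixpoint by blast
  have row: "row x \<in> mixed n" and col: "col x \<in> mixed n"
    using n by (simp_all add: row_def col_def to_mixed_mixed)
  let ?a = "nash_map n (row x) (row_payoffs n R (col x))"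
  let ?b = "nash_map n (col x) (col_payoffs n C (row x))"
  have a: "?a \<in> mixed n" and b: "?b \<in> mixed n"
    using row col by (simp_all add: nash_map_mixed)
  have "row (G x) = ?a" and "col (G x) = ?b"
    by (simp_all add: G_def row_def [of "pair_embed n _ _"] col_def [of "pair_embed n _ _"]
        unembed_fst_pair_embed[OF a] unembed_snd_pair_embed[OF b] to_mixed_id[OF a] to_mixed_id[OF b])
  then have "nash_equilibrium n R C (row x) (col x)"
    unfolding \<open>G x = x\<close> using row col by (intro nash_equilibrium_if_nash_map_fixed) simp_all
  then show ?thesis by blast
qed

section \<open>Approximation stability\<close>

lemma eps_equilibrium_near_nash:
  assumes R: "\<forall>i<n. \<forall>j<n. 0 \<le> R i j \<and> R i j \<le> 1"
    and C: "\<forall>i<n. \<forall>j<n. 0 \<le> C i j \<and> C i j \<le> 1"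
    and ne: "nash_equilibrium n R C a b" and p: "p \<in> mixed n" and q: "q \<in> mixed n"
    and near: "pdist n (p, q) (a, b) \<le> \<delta>"
  shows "eps_equilibrium n R C (3 * \<delta>) p q"
proof -
  have a: "a \<in> mixed n" and b: "b \<in> mixed n" using ne by (auto simp: nash_equilibrium_def)
  have dp: "sdist n p a \<le> \<delta>" "sdist n a p \<le> \<delta>" and dq: "sdist n q b \<le> \<delta>" "sdist n b q \<le> \<delta>"
    using near by (auto simp: pdist_def sdist_commute)
  have "payoff n R (unitv i) q \<le> payoff n R p q + 3 * \<delta>" if i: "i < n" for i
  proof -
    have "payoff n R (unitv i) b \<le> payoff n R a b" using ne i by (auto simp: nash_equilibrium_def)
    moreover note payoff_dist_right[OF R unitv_mixed[OF i] q b] payoff_dist_left[OF R b a p]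
      payoff_dist_right[OF R p b q]
    ultimately show ?thesis using dp dq by linarith
  qed
  moreover have "payoff n C p (unitv j) \<le> payoff n C p q + 3 * \<delta>" if j: "j < n" for j
  proof -
    have "payoff n C a (unitv j) \<le> payoff n C a b" using ne j by (auto simp: nash_equilibrium_def)
    moreover note payoff_dist_left[OF C unitv_mixed[OF j] p a] payoff_dist_right[OF C a b q]
      payoff_dist_left[OF C q a p]
    ultimately show ?thesis using dp dq by linarith
  qed
  ultimately show ?thesis using p q by (simp add: eps_equilibrium_def)
qed

definition mix :: "real \<Rightarrow> (nat \<Rightarrow> real) \<Rightarrow> (nat \<Rightarrow> real) \<Rightarrow> nat \<Rightarrow> real" where
  "mix t p p' = (\<lambda>i. (1 - t) * p i + t * p' i)"

lemma mix_mixed: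
  assumes "0 \<le> t" "t \<le> 1" and "p \<in> mixed n" and "p' \<in> mixed n"
  shows "mix t p p' \<in> mixed n"
proof -
  have "(\<Sum>i<n. (1 - t) * p i + t * p' i) = (1 - t) * (\<Sum>i<n. p i) + t * (\<Sum>i<n. p' i)"
    by (simp add: sum.distrib sum_distrib_left)
  with assms show ?thesis by (auto simp: mixed_def mix_def)
qed

lemma sdist_mix: "sdist n (mix s p p') (mix t p p') = \<bar>s - t\<bar> * sdist n p p'"
proof -
  have "\<bar>mix s p p' i - mix t p p' i\<bar> = \<bar>s - t\<bar> * \<bar>p i - p' i\<bar>" for i
    by (simp add: mix_def abs_mult [symmetric] algebra_simps)
  then show ?thesis by (simp add: sdist_def sum_distrib_left)
qed

lemma approx_stable_all_near_nash:
  assumes R: "\<forall>i<n. \<forall>j<n. 0 \<le> R i j \<and> R i j \<le> 1"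
    and C: "\<forall>i<n. \<forall>j<n. 0 \<le> C i j \<and> C i j \<le> 1"
    and stable: "approx_stable n R C \<epsilon> \<Delta>" and small: "3 * \<Delta> < \<epsilon>" and "0 \<le> \<Delta>"
    and ne: "nash_equilibrium n R C a b" and p: "p \<in> mixed n" and q: "q \<in> mixed n"
  shows "\<exists>a' b'. nash_equilibrium n R C a' b' \<and> pdist n (p, q) (a', b') \<le> \<Delta>"
proof -
  have a: "a \<in> mixed n" and b: "b \<in> mixed n" using ne by (auto simp: nash_equilibrium_def)
  define z where "z t = (mix t a p, mix t b q)" for t
  obtain K :: nat where K: "1 / (\<epsilon> / 3 - \<Delta>) < real K" using reals_Archimedean2 by blast
  have gap: "\<epsilon> / 3 - \<Delta> > 0" using small by simp
  with K have K_pos: "real K > 0" by (metis less_trans zero_less_divide_1_iff)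
  with K gap have step: "1 / real K + \<Delta> \<le> \<epsilon> / 3" by (simp add: field_simps)
  have z_dist: "pdist n (z s) (z t) \<le> \<bar>s - t\<bar>" for s t
    using sdist_le_1[OF a p] sdist_le_1[OF b q]
    by (simp add: pdist_def z_def sdist_mix mult_left_le)
  have "\<exists>a' b'. nash_equilibrium n R C a' b' \<and> pdist n (z (k / K)) (a', b') \<le> \<Delta>" if "k \<le> K" for k
    using that
  proof (induction k)
    case 0
    have "pdist n (z 0) (a, b) = 0" by (simp add: z_def mix_def pdist_def sdist_def)
    with ne \<open>0 \<le> \<Delta>\<close> show ?case by force
  next
    case (Suc k)
    then obtain a' b' where ne': "nash_equilibrium n R C a' b'"
      and near: "pdist n (z (k / K)) (a', b') \<le> \<Delta>" by auto
    define t where "t = real (Suc k) / K"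
    have t: "0 \<le> t" "t \<le> 1" using Suc.prems K_pos by (auto simp: t_def field_simps)
    have "pdist n (z t) (a', b') \<le> pdist n (z t) (z (k / K)) + pdist n (z (k / K)) (a', b')"
      by (rule pdist_triangle)
    also have "\<dots> \<le> \<bar>t - k / K\<bar> + \<Delta>"
      using z_dist near by (rule add_mono)
    also have "\<bar>t - k / K\<bar> = 1 / K"
      using K_pos by (simp add: t_def flip: diff_divide_distrib)
    finally have "pdist n (mix t a p, mix t b q) (a', b') \<le> \<epsilon> / 3" using step by (simp add: z_def)
    from eps_equilibrium_near_nash[OF R C ne' mix_mixed[OF t a p] mix_mixed[OF t b q] this]
    have "eps_equilibrium n R C \<epsilon> (mix t a p) (mix t b q)" by simp
    with stable show ?case by (simp add: approx_stable_def z_def t_def)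
  qed
  from this[of K] K_pos show ?thesis by (simp add: z_def mix_def)
qed

theorem lemma5:
  fixes n :: nat and R C :: "nat \<Rightarrow> nat \<Rightarrow> real" and \<epsilon> \<Delta> :: real
  assumes "0 \<le> \<epsilon>" and "0 \<le> \<Delta>"
    and "\<forall>i<n. \<forall>j<n. 0 \<le> R i j \<and> R i j \<le> 1"
    and "\<forall>i<n. \<forall>j<n. 0 \<le> C i j \<and> C i j \<le> 1"
    and "approx_stable n R C \<epsilon> \<Delta>"
    and "\<exists>p q. p \<in> mixed n \<and> q \<in> mixed n \<and>
           (\<forall>p' q'. nash_equilibrium n R C p' q' \<longrightarrow> pdist n (p, q) (p', q') > \<Delta>)"
  shows "3 * \<Delta> \<ge> \<epsilon>"
proof (rule ccontr)
  assume "\<not> 3 * \<Delta> \<ge> \<epsilon>"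
  then have small: "3 * \<Delta> < \<epsilon>" by simp
  obtain p q where p: "p \<in> mixed n" and q: "q \<in> mixed n"
    and far: "\<And>p' q'. nash_equilibrium n R C p' q' \<Longrightarrow> pdist n (p, q) (p', q') > \<Delta>"
    using assms(6) by blast
  obtain a b where "nash_equilibrium n R C a b"
    using nash_equilibrium_exists[OF mixed_imp_pos[OF p]] by blast
  then obtain a' b' where "nash_equilibrium n R C a' b'" and "pdist n (p, q) (a', b') \<le> \<Delta>"
    using approx_stable_all_near_nash[OF assms(3-5) small assms(2) _ p q] by blast
  with far show False by force
qed

end
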